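(* Let $\mathbb{I}>0$ and, for $\ell>0$, let $g(\ell)=4\ell^2\int_0^\infty u^2\,\Phi\big(-\frac{u\ell\sqrt{\mathbb{I}}}{2}\big)\phi(u)\,du$. Then $g$ is maximized at $\ell_{opt}=\frac{2.426}{\sqrt{\mathbb{I}}}$ (constant given to three decimals), and the corresponding acceptance rate $$\alpha_{opt}=4\int_0^\infty\Phi\Big(-\frac{u\ell_{opt}\sqrt{\mathbb{I}}}{2}\Big)\phi(u)\,du$$ equals $0.439$ up to three decimal places.
   Context: $\Phi$ and $\phi$ are the standard normal cdf and density. In the paper, $g(\ell)$ is the diffusion speed of the limiting Langevin diffusion of the additive TMCMC chain for i.i.d. product targets $\prod_i f(x_i)$, with $\mathbb{I}=E_f[(f'(X)/f(X))^2]$, and $\alpha_{opt}$ is the limiting expected acceptance rate at scaling $\ell_{opt}$. *)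

theory Defs
  imports "HOL-Probability.Probability"
begin

definition phi :: "real \<Rightarrow> real" where
  "phi u = exp (- (u^2) / 2) / sqrt (2 * pi)"

definition Phi :: "real \<Rightarrow> real" where
  "Phi x = (LBINT t:{..x}. phi t)"

definition speed :: "real \<Rightarrow> real \<Rightarrow> real" where
  "speed II l = 4 * l^2 * (LBINT u:{0<..}. u^2 * Phi (- (u * l * sqrt II) / 2) * phi u)"

definition acc_rate :: "real \<Rightarrow> real \<Rightarrow> real" where
  "acc_rate II l = 4 * (LBINT u:{0<..}. Phi (- (u * l * sqrt II) / 2) * phi u)"

end

theory Submission
  imports Defs "HOL-Real_Asymp.Real_Asymp"
begin

text \<open>
  Writing \<open>\<Phi>(-us) = u \<integral>\<^sub>s\<^sup>\<infinity> \<phi>(uw) dw\<close> and exchanging the order of integration, the inner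
  integrals become elementary Gaussian moments, and one obtains the closed forms
  \<open>\<alpha>(\<ell>) = 1 - (2/\<pi>) arctan s\<close> and \<open>g(\<ell>) = (16/\<I>) h(s)\<close> with \<open>s = \<ell>\<surd>\<I>/2\<close> and
  \<open>h(s) = s\<^sup>2 (\<pi>/2 - arctan s - s/(1+s\<^sup>2)) / (2\<pi>)\<close>.
  Now \<open>h'(s) = s r(s) / \<pi>\<close> where \<open>r(s) = \<pi>/2 - arctan s - s/(1+s\<^sup>2) - s/(1+s\<^sup>2)\<^sup>2\<close> has derivative
  \<open>(s\<^sup>2 - 3)/(1+s\<^sup>2)\<^sup>3\<close>: it decreases on \<open>[0, \<surd>3]\<close>, then increases to its limit 0.
  So \<open>r\<close> has a single sign change on \<open>(0, \<infinity>)\<close>, at the unique maximiser of \<open>h\<close>.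
  Rational bounds for \<open>\<pi>\<close> and truncated arctan series locate it in \<open>[1.2128, 1.21322]\<close>, which
  determines both rounded constants.
\<close>

subsection \<open>Rational functions of \<open>1 + x\<^sup>2\<close> and the arctan tail\<close>

lemma one_plus_power2_pos: "0 < 1 + (x::real)^2"
  by (simp add: add_pos_nonneg)

lemma DERIV_one_plus_power2: "DERIV (\<lambda>x. 1 + x^2) x :> 2 * x"
  for x :: real
  using DERIV_add[OF DERIV_const DERIV_pow[of 2 x]] by simp

lemma DERIV_div_one_plus_power2: "DERIV (\<lambda>x. x / (1 + x^2)) x :> (1 - x^2) / (1 + x^2)^2"
  for x :: real
proof -
  have "1 + x^2 \<noteq> 0" using one_plus_power2_pos[of x] by simp
  then have "(1 * (1 + x^2) - x * (2 * x)) / ((1 + x^2) * (1 + x^2)) = (1 - x^2) / (1 + x^2)^2"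
    by (simp add: power2_eq_square)
  with DERIV_divide[OF DERIV_ident DERIV_one_plus_power2 \<open>1 + x^2 \<noteq> 0\<close>] show ?thesis
    by simp
qed

lemma DERIV_div_one_plus_power2_squared:
  "DERIV (\<lambda>x. x / (1 + x^2)^2) x :> (1 - 3 * x^2) / (1 + x^2)^3"
  for x :: real
proof -
  define t where "t = 1 + x^2"
  have t: "t > 0" using one_plus_power2_pos[of x] by (simp add: t_def)
  have "(1 * t^2 - x * (of_nat 2 * (2 * x * t ^ (2 - Suc 0)))) / (t^2 * t^2) = (t - 4 * x^2) / t^3"
    using t by (simp add: field_simps power2_eq_square power3_eq_cube)
  also have "t - 4 * x^2 = 1 - 3 * x^2" by (simp add: t_def)
  finally have eq: "(1 * t^2 - x * (of_nat 2 * (2 * x * t ^ (2 - Suc 0)))) / (t^2 * t^2) = (1 - 3 * x^2) / t^3" .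
  have "(1 + x^2)^2 \<noteq> 0" using t by (simp add: t_def)
  from DERIV_divide[OF DERIV_ident DERIV_power[OF DERIV_one_plus_power2[of x], of 2] this]
  show ?thesis by (rule DERIV_cong) (rule eq[unfolded t_def])
qed

lemma DERIV_arctan_tail:
  "DERIV (\<lambda>x. pi/2 - arctan x - x / (1 + x^2)) x :> - 2 / (1 + x^2)^2"
  for x :: real
proof -
  have "1 + x^2 \<noteq> 0" using one_plus_power2_pos[of x] by simp
  then have "0 - inverse (1 + x^2) - (1 - x^2) / (1 + x^2)^2 = - 2 / (1 + x^2)^2"
    by (simp add: divide_simps) (simp add: algebra_simps power2_eq_square)
  then show ?thesis
    using DERIV_diff[OF DERIV_diff[OF DERIV_const[of "pi/2"] DERIV_arctan[of x]]
        DERIV_div_one_plus_power2[of x]]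
    by simp
qed

lemma arctan_tail_tendsto: "((\<lambda>x. pi/2 - arctan x - x / (1 + x^2)) \<longlongrightarrow> 0) at_top"
  by real_asymp

lemma arctan_tail_nonneg: "0 \<le> pi/2 - arctan s - s / (1 + s^2)"
proof (rule tendsto_upperbound[OF arctan_tail_tendsto])
  have mono: "pi/2 - arctan y - y / (1 + y^2) \<le> pi/2 - arctan s - s / (1 + s^2)" if "s \<le> y" for y
  proof (rule DERIV_nonpos_imp_nonincreasing[OF that])
    fix x :: real
    show "\<exists>d. DERIV (\<lambda>x. pi/2 - arctan x - x / (1 + x^2)) x :> d \<and> d \<le> 0"
      using DERIV_arctan_tail[of x] by (intro exI[of _ "- 2 / (1 + x^2)^2"]) simp
  qed
  show "\<forall>\<^sub>F y in at_top. pi/2 - arctan y - y / (1 + y^2) \<le> pi/2 - arctan s - s / (1 + s^2)"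
    using eventually_ge_at_top[of s] by eventually_elim (rule mono)
qed simp

subsection \<open>Closed forms of the Gaussian integrals\<close>

lemma phi_nonneg: "0 \<le> phi u"
  by (simp add: phi_def)

lemma phi_minus: "phi (- u) = phi u"
  by (simp add: phi_def)

lemma phi_measurable [measurable]: "phi \<in> borel_measurable borel"
  unfolding phi_def by measurable

lemma phi_eq_std_normal_density: "phi u = std_normal_density u"
  by (simp add: phi_def std_normal_density_def)

lemma integrable_phi: "integrable lborel phi"
  unfolding phi_eq_std_normal_density[abs_def] by simp

lemma phi_mult_phi: "phi u * phi (u * w) = exp (- ((1 + w^2) * u^2) / 2) / (2 * pi)"
proof -
  have "phi u * phi (u * w) = exp (- (u^2) / 2) * exp (- ((u * w)^2) / 2) / (2 * pi)"
    by (simp add: phi_def)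
  also have "\<dots> = exp (- (u^2) / 2 + - ((u * w)^2) / 2) / (2 * pi)"
    by (simp add: exp_add[symmetric])
  also have "- (u^2) / 2 + - ((u * w)^2) / 2 = - ((1 + w^2) * u^2) / 2"
    by (simp add: algebra_simps power_mult_distrib)
  finally show ?thesis .
qed

lemma ennreal_Phi: "ennreal (Phi x) = (\<integral>\<^sup>+t. ennreal (phi t * indicator {..x} t) \<partial>lborel)"
proof -
  have "integrable lborel (\<lambda>t. phi t * indicator {..x} t)"
    by (rule integrable_real_mult_indicator) (auto simp: integrable_phi)
  moreover have "Phi x = (\<integral>t. phi t * indicator {..x} t \<partial>lborel)"
    unfolding Phi_def set_lebesgue_integral_def by (simp add: mult.commute)
  ultimately show ?thesis
    by (simp add: nn_integral_eq_integral phi_nonneg)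
qed

lemma Phi_nonneg: "0 \<le> Phi x"
  unfolding Phi_def set_lebesgue_integral_def by (intro integral_nonneg_AE) (simp add: phi_nonneg)

lemma mono_Phi: "mono Phi"
proof
  fix x y :: real assume "x \<le> y"
  then have "ennreal (Phi x) \<le> ennreal (Phi y)"
    unfolding ennreal_Phi
    by (intro nn_integral_mono) (auto simp: phi_nonneg split: split_indicator)
  then show "Phi x \<le> Phi y" using Phi_nonneg[of y] by simp
qed

lemma Phi_measurable [measurable]: "Phi \<in> borel_measurable borel"
  by (rule borel_measurable_mono[OF mono_Phi])

lemma ennreal_Phi_scaled:
  assumes "u > 0"
  shows "ennreal (Phi (- (u * s))) = ennreal u * (\<integral>\<^sup>+w. ennreal (phi (u * w) * indicator {s..} w) \<partial>lborel)"
proof -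
  have "ennreal (Phi (- (u * s)))
      = \<bar>- u\<bar> * (\<integral>\<^sup>+w. ennreal (phi (0 + - u * w) * indicator {.. - (u * s)} (0 + - u * w)) \<partial>lborel)"
    unfolding ennreal_Phi by (rule nn_integral_real_affine) (use assms in auto)
  also have "(\<lambda>w. ennreal (phi (0 + - u * w) * indicator {.. - (u * s)} (0 + - u * w)))
           = (\<lambda>w. ennreal (phi (u * w) * indicator {s..} w))"
  proof
    fix w
    have "phi (0 + - u * w) = phi (u * w)" using phi_minus[of "u * w"] by simp
    moreover have "indicator {.. - (u * s)} (0 + - u * w) = (indicator {s..} w :: real)"
      using assms by (auto simp: indicator_def)
    ultimately show "ennreal (phi (0 + - u * w) * indicator {.. - (u * s)} (0 + - u * w))
                   = ennreal (phi (u * w) * indicator {s..} w)"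
      by simp
  qed
  finally show ?thesis using assms by simp
qed

lemma nn_integral_gaussian_moment1:
  fixes a :: real
  assumes "a > 0"
  shows "(\<integral>\<^sup>+u. ennreal (u * exp (- (a * u^2) / 2)) * indicator {0..} u \<partial>lborel) = ennreal (1 / a)"
proof -
  have "(\<integral>\<^sup>+u. ennreal (u * exp (- (a * u^2) / 2)) * indicator {0..} u \<partial>lborel)
      = ennreal (0 - (- exp (- (a * 0^2) / 2) / a))"
  proof (rule nn_integral_FTC_atLeast)
    fix x :: real assume "0 \<le> x"
    show "DERIV (\<lambda>u. - exp (- (a * u^2) / 2) / a) x :> x * exp (- (a * x^2) / 2)"
      using assms by (auto intro!: derivative_eq_intros simp: field_simps power2_eq_square)
    show "0 \<le> x * exp (- (a * x^2) / 2)" using \<open>0 \<le> x\<close> by simp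
  next
    show "((\<lambda>u. - exp (- (a * u^2) / 2) / a) \<longlongrightarrow> 0) at_top" using assms by real_asymp
  qed measurable
  then show ?thesis by simp
qed

lemma nn_integral_gaussian_moment3:
  fixes a :: real
  assumes "a > 0"
  shows "(\<integral>\<^sup>+u. ennreal (u^3 * exp (- (a * u^2) / 2)) * indicator {0..} u \<partial>lborel) = ennreal (2 / a^2)"
proof -
  have "(\<integral>\<^sup>+u. ennreal (u^3 * exp (- (a * u^2) / 2)) * indicator {0..} u \<partial>lborel)
      = ennreal (0 - (- (a * 0^2 + 2) / a^2 * exp (- (a * 0^2) / 2)))"
  proof (rule nn_integral_FTC_atLeast)
    fix x :: real assume "0 \<le> x"
    show "DERIV (\<lambda>u. - (a * u^2 + 2) / a^2 * exp (- (a * u^2) / 2)) x :> x^3 * exp (- (a * x^2) / 2)"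
      using assms
      by (auto intro!: derivative_eq_intros simp: field_simps power2_eq_square power3_eq_cube)
    show "0 \<le> x^3 * exp (- (a * x^2) / 2)" using \<open>0 \<le> x\<close> by simp
  next
    show "((\<lambda>u. - (a * u^2 + 2) / a^2 * exp (- (a * u^2) / 2)) \<longlongrightarrow> 0) at_top"
      using assms by real_asymp
  qed measurable
  then show ?thesis by simp
qed

lemma borel_measurable_inverse_one_plus_power2 [measurable]:
  "(\<lambda>w::real. 1 / (1 + w^2) ^ n) \<in> borel_measurable borel"
proof -
  have "(1 + w^2) ^ n \<noteq> 0" for w :: real
    using one_plus_power2_pos[of w] by simp
  then show ?thesis
    by (intro borel_measurable_continuous_onI continuous_on_divide continuous_intros) auto
qed

lemma nn_integral_inverse_one_plus_power2:
  "(\<integral>\<^sup>+w. ennreal (1 / (1 + w^2)) * indicator {s..} w \<partial>lborel) = ennreal (pi/2 - arctan s)"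
proof (rule nn_integral_FTC_atLeast)
  show "(\<lambda>w::real. 1 / (1 + w^2)) \<in> borel_measurable borel"
    using borel_measurable_inverse_one_plus_power2[of 1] by simp
  fix x :: real
  show "DERIV arctan x :> 1 / (1 + x^2)"
    using DERIV_arctan[of x] by (simp add: divide_inverse)
  show "0 \<le> 1 / (1 + x^2)" using one_plus_power2_pos[of x] by simp
qed (rule tendsto_arctan_at_top)

lemma nn_integral_inverse_one_plus_power2_squared:
  "(\<integral>\<^sup>+w. ennreal (1 / (1 + w^2)^2) * indicator {s..} w \<partial>lborel)
   = ennreal ((pi/2 - arctan s - s / (1 + s^2)) / 2)"
proof -
  have "(\<integral>\<^sup>+w. ennreal (1 / (1 + w^2)^2) * indicator {s..} w \<partial>lborel)
      = ennreal (0 - (- (pi/2 - arctan s - s / (1 + s^2)) / 2))"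
  proof (rule nn_integral_FTC_atLeast)
    fix x :: real
    show "DERIV (\<lambda>w. - (pi/2 - arctan w - w / (1 + w^2)) / 2) x :> 1 / (1 + x^2)^2"
      using DERIV_cdivide[OF DERIV_minus[OF DERIV_arctan_tail[of x]], of 2] by simp
    show "0 \<le> 1 / (1 + x^2)^2" by simp
  next
    show "((\<lambda>w. - (pi/2 - arctan w - w / (1 + w^2)) / 2) \<longlongrightarrow> 0) at_top"
      using tendsto_divide[OF tendsto_minus[OF arctan_tail_tendsto] tendsto_const[of 2]] by simp
  qed measurable
  then show ?thesis by (simp only: diff_0 minus_divide_left minus_minus)
qed

lemma ennreal_power_Phi_phi_eq_nn_integral:
  "ennreal (indicator {0<..} u * (u^k * Phi (- (u * s)) * phi u))
   = (\<integral>\<^sup>+w. ennreal (indicator {0<..} u * u ^ Suc k * phi u * phi (u * w) * indicator {s..} w) \<partial>lborel)"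
proof (cases "u > 0")
  case True
  have "ennreal (indicator {0<..} u * (u^k * Phi (- (u * s)) * phi u))
      = ennreal (u^k * phi u) * ennreal (Phi (- (u * s)))"
    using True by (simp add: ennreal_mult'[symmetric] Phi_nonneg phi_nonneg mult_ac)
  also have "\<dots> = ennreal (u^k * phi u) * ennreal u * (\<integral>\<^sup>+w. ennreal (phi (u * w) * indicator {s..} w) \<partial>lborel)"
    by (simp add: ennreal_Phi_scaled[OF True] mult.assoc)
  also have "ennreal (u^k * phi u) * ennreal u = ennreal (u ^ Suc k * phi u)"
    using True by (simp add: ennreal_mult'[symmetric] phi_nonneg mult_ac)
  also have "ennreal (u ^ Suc k * phi u) * (\<integral>\<^sup>+w. ennreal (phi (u * w) * indicator {s..} w) \<partial>lborel)
      = (\<integral>\<^sup>+w. ennreal (u ^ Suc k * phi u) * ennreal (phi (u * w) * indicator {s..} w) \<partial>lborel)"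
    by (rule nn_integral_cmult[symmetric]) measurable
  also have "\<dots> = (\<integral>\<^sup>+w. ennreal (indicator {0<..} u * u ^ Suc k * phi u * phi (u * w) * indicator {s..} w) \<partial>lborel)"
    using True by (intro nn_integral_cong) (simp add: ennreal_mult'[symmetric] phi_nonneg mult_ac)
  finally show ?thesis .
qed simp

lemma nn_integral_power_phi_phi_in_u:
  "(\<integral>\<^sup>+u. ennreal (indicator {0<..} u * u ^ Suc k * phi u * phi (u * w) * indicator {s..} w) \<partial>lborel)
   = ennreal (1 / (2 * pi)) *
     ((\<integral>\<^sup>+u. ennreal (u ^ Suc k * exp (- ((1 + w^2) * u^2) / 2)) * indicator {0..} u \<partial>lborel)
      * indicator {s..} w)"
proof -
  let ?g = "\<lambda>u. ennreal (u ^ Suc k * exp (- ((1 + w^2) * u^2) / 2)) * indicator {0..} u"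
  have "ennreal (indicator {0<..} u * u ^ Suc k * phi u * phi (u * w) * indicator {s..} w)
      = ennreal (1 / (2 * pi)) * ?g u * indicator {s..} w" for u
  proof (cases "u > 0")
    case True
    then show ?thesis
      by (simp add: mult.assoc phi_mult_phi ennreal_mult'[symmetric] split: split_indicator)
  next
    case False
    then show ?thesis by (cases "u = 0") (auto simp: indicator_def)
  qed
  then have "(\<integral>\<^sup>+u. ennreal (indicator {0<..} u * u ^ Suc k * phi u * phi (u * w) * indicator {s..} w) \<partial>lborel)
      = (\<integral>\<^sup>+u. ennreal (1 / (2 * pi)) * ?g u * indicator {s..} w \<partial>lborel)"
    by (intro nn_integral_cong) simp
  also have "\<dots> = (\<integral>\<^sup>+u. ennreal (1 / (2 * pi)) * ?g u \<partial>lborel) * indicator {s..} w"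
    by (rule nn_integral_multc) measurable
  also have "\<dots> = ennreal (1 / (2 * pi)) * (\<integral>\<^sup>+u. ?g u \<partial>lborel) * indicator {s..} w"
    by (subst nn_integral_cmult) auto
  finally show ?thesis
    by (simp only: mult.assoc)
qed

lemma nn_integral_power_Phi_phi:
  "(\<integral>\<^sup>+u. ennreal (indicator {0<..} u * (u^k * Phi (- (u * s)) * phi u)) \<partial>lborel)
   = (\<integral>\<^sup>+w. ennreal (1 / (2 * pi)) *
        ((\<integral>\<^sup>+u. ennreal (u ^ Suc k * exp (- ((1 + w^2) * u^2) / 2)) * indicator {0..} u \<partial>lborel)
         * indicator {s..} w) \<partial>lborel)"
proof -
  have "(\<integral>\<^sup>+u. ennreal (indicator {0<..} u * (u^k * Phi (- (u * s)) * phi u)) \<partial>lborel)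
      = (\<integral>\<^sup>+u. (\<integral>\<^sup>+w. ennreal (indicator {0<..} u * u ^ Suc k * phi u * phi (u * w) * indicator {s..} w)
          \<partial>lborel) \<partial>lborel)"
    by (simp only: ennreal_power_Phi_phi_eq_nn_integral)
  also have "\<dots> = (\<integral>\<^sup>+w. (\<integral>\<^sup>+u. ennreal (indicator {0<..} u * u ^ Suc k * phi u * phi (u * w) * indicator {s..} w)
          \<partial>lborel) \<partial>lborel)"
    by (rule lborel_pair.Fubini'[symmetric]) measurable
  finally show ?thesis
    by (simp only: nn_integral_power_phi_phi_in_u)
qed

lemma nn_integral_Phi_phi:
  "(\<integral>\<^sup>+u. ennreal (indicator {0<..} u * (Phi (- (u * s)) * phi u)) \<partial>lborel)
   = ennreal ((pi/2 - arctan s) / (2 * pi))"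
proof -
  have "(\<integral>\<^sup>+u. ennreal (u ^ Suc 0 * exp (- ((1 + w^2) * u^2) / 2)) * indicator {0..} u \<partial>lborel)
      = ennreal (1 / (1 + w^2))" for w :: real
    using nn_integral_gaussian_moment1[OF one_plus_power2_pos[of w]] by simp
  then have "(\<integral>\<^sup>+u. ennreal (indicator {0<..} u * (Phi (- (u * s)) * phi u)) \<partial>lborel)
      = (\<integral>\<^sup>+w. ennreal (1 / (2 * pi)) * (ennreal (1 / (1 + w^2)) * indicator {s..} w) \<partial>lborel)"
    using nn_integral_power_Phi_phi[of 0 s] by simp
  also have "\<dots> = ennreal (1 / (2 * pi)) * ennreal (pi/2 - arctan s)"
    by (simp add: nn_integral_cmult nn_integral_inverse_one_plus_power2)
  finally show ?thesis
    by (simp add: ennreal_mult'[symmetric])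
qed

lemma nn_integral_power2_Phi_phi:
  "(\<integral>\<^sup>+u. ennreal (indicator {0<..} u * (u^2 * Phi (- (u * s)) * phi u)) \<partial>lborel)
   = ennreal ((pi/2 - arctan s - s / (1 + s^2)) / (2 * pi))"
proof -
  have "(\<integral>\<^sup>+u. ennreal (u ^ Suc 2 * exp (- ((1 + w^2) * u^2) / 2)) * indicator {0..} u \<partial>lborel)
      = ennreal (2 / (1 + w^2)^2)" for w :: real
    using nn_integral_gaussian_moment3[OF one_plus_power2_pos[of w]] by simp
  then have "(\<integral>\<^sup>+u. ennreal (indicator {0<..} u * (u^2 * Phi (- (u * s)) * phi u)) \<partial>lborel)
      = (\<integral>\<^sup>+w. ennreal (1 / (2 * pi)) * (ennreal (2 / (1 + w^2)^2) * indicator {s..} w) \<partial>lborel)"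
    using nn_integral_power_Phi_phi[of 2 s] by simp
  also have "\<dots> = (\<integral>\<^sup>+w. ennreal (1 / pi) * (ennreal (1 / (1 + w^2)^2) * indicator {s..} w) \<partial>lborel)"
    by (intro nn_integral_cong) (simp add: ennreal_mult'[symmetric] mult.assoc[symmetric])
  also have "\<dots> = ennreal (1 / pi) * ennreal ((pi/2 - arctan s - s / (1 + s^2)) / 2)"
    by (simp add: nn_integral_cmult nn_integral_inverse_one_plus_power2_squared)
  finally show ?thesis
    by (simp add: ennreal_mult'[symmetric] ac_simps)
qed

lemma set_integral_eq_of_nn_integral:
  fixes f :: "real \<Rightarrow> real"
  assumes [measurable]: "f \<in> borel_measurable borel" "A \<in> sets borel"
    and "\<And>x. 0 \<le> f x" "0 \<le> c"
    and "(\<integral>\<^sup>+x. ennreal (indicator A x * f x) \<partial>lborel) = ennreal c"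
  shows "(LBINT x:A. f x) = c"
proof -
  have "has_bochner_integral lborel (\<lambda>x. indicator A x * f x) c"
    using assms by (intro has_bochner_integral_nn_integral) auto
  then show ?thesis
    unfolding set_lebesgue_integral_def by (simp add: has_bochner_integral_integral_eq)
qed

lemma acc_rate_eq: "acc_rate II l = 1 - 2 * arctan (l * sqrt II / 2) / pi"
proof -
  define s where "s = l * sqrt II / 2"
  have "(LBINT u:{0<..}. Phi (- (u * s)) * phi u) = (pi/2 - arctan s) / (2 * pi)"
    using arctan_ubound[of s]
    by (intro set_integral_eq_of_nn_integral nn_integral_Phi_phi)
       (auto simp: Phi_nonneg phi_nonneg less_imp_le)
  moreover have "(\<lambda>u. Phi (- (u * l * sqrt II) / 2) * phi u) = (\<lambda>u. Phi (- (u * s)) * phi u)"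
    by (simp add: s_def mult.assoc)
  ultimately show ?thesis
    unfolding acc_rate_def s_def[symmetric] by (simp add: field_simps)
qed

definition speed_shape :: "real \<Rightarrow> real" where
  "speed_shape s = s^2 * (pi/2 - arctan s - s / (1 + s^2)) / (2 * pi)"

lemma speed_eq_speed_shape:
  assumes "II > 0"
  shows "speed II l = 16 / II * speed_shape (l * sqrt II / 2)"
proof -
  define s where "s = l * sqrt II / 2"
  have "(LBINT u:{0<..}. u^2 * Phi (- (u * s)) * phi u) = (pi/2 - arctan s - s / (1 + s^2)) / (2 * pi)"
    using arctan_tail_nonneg[of s]
    by (intro set_integral_eq_of_nn_integral nn_integral_power2_Phi_phi)
       (auto simp: Phi_nonneg phi_nonneg)
  moreover have "(\<lambda>u. u^2 * Phi (- (u * l * sqrt II) / 2) * phi u) = (\<lambda>u. u^2 * Phi (- (u * s)) * phi u)"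
    by (simp add: s_def mult.assoc)
  ultimately have "speed II l = 4 * l^2 * ((pi/2 - arctan s - s / (1 + s^2)) / (2 * pi))"
    unfolding speed_def by simp
  also have "l^2 = 4 * s^2 / II"
    using assms by (simp add: s_def power_mult_distrib field_simps)
  finally show ?thesis
    unfolding speed_shape_def s_def[symmetric] using assms by (simp add: field_simps)
qed

subsection \<open>Unimodality of the speed\<close>

definition speed_shape_slope :: "real \<Rightarrow> real" where
  "speed_shape_slope s = pi/2 - arctan s - s / (1 + s^2) - s / (1 + s^2)^2"

lemma DERIV_speed_shape: "DERIV speed_shape x :> x * speed_shape_slope x / pi"
proof -
  have rational_identity: "(x^2 * (- 2 / t^2) + 2 * x * g) / (2 * pi) = x * (g - x / t^2) / pi"
    if "t \<noteq> 0" for t g :: real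
    using that by (simp add: field_simps power2_eq_square)
  have "DERIV (\<lambda>s. s^2) x :> 2 * x"
    using DERIV_pow[of 2 x] by simp
  from DERIV_cdivide[OF DERIV_mult'[OF this DERIV_arctan_tail[of x]], of "2 * pi"]
  have "DERIV speed_shape x :>
      (x^2 * (- 2 / (1 + x^2)^2) + 2 * x * (pi/2 - arctan x - x / (1 + x^2))) / (2 * pi)"
    unfolding speed_shape_def[abs_def] .
  then show ?thesis
    unfolding speed_shape_slope_def
    by (rule DERIV_cong) (rule rational_identity, use one_plus_power2_pos[of x] in simp)
qed

lemma DERIV_speed_shape_slope: "DERIV speed_shape_slope x :> (x^2 - 3) / (1 + x^2)^3"
proof -
  have rational_identity: "- 2 / t^2 - (1 - 3 * (t - 1)) / t^3 = (t - 1 - 3) / t^3"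
    if "t > 0" for t :: real
    using that by (simp add: field_simps power2_eq_square power3_eq_cube)
  show ?thesis
    using DERIV_diff[OF DERIV_arctan_tail[of x] DERIV_div_one_plus_power2_squared[of x]]
    unfolding speed_shape_slope_def[abs_def]
    by (rule DERIV_cong)
       (use rational_identity[OF one_plus_power2_pos[of x]] in \<open>simp only: add_diff_cancel_left'\<close>)
qed

lemma speed_shape_slope_antimono:
  assumes "0 \<le> x" "x \<le> y" "y^2 \<le> 3"
  shows "speed_shape_slope y \<le> speed_shape_slope x"
proof (rule DERIV_nonpos_imp_nonincreasing[OF assms(2)])
  fix z assume "x \<le> z" "z \<le> y"
  then have "z^2 \<le> y^2" using assms(1) by (intro power_mono) auto
  then have "(z^2 - 3) / (1 + z^2)^3 \<le> 0"
    using assms(3) one_plus_power2_pos[of z] by (intro divide_nonpos_pos) auto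
  then show "\<exists>d. DERIV speed_shape_slope z :> d \<and> d \<le> 0"
    using DERIV_speed_shape_slope by blast
qed

lemma speed_shape_slope_tendsto: "(speed_shape_slope \<longlongrightarrow> 0) at_top"
  unfolding speed_shape_slope_def[abs_def] by real_asymp

lemma speed_shape_slope_neg:
  assumes "0 \<le> s" "3 \<le> s^2"
  shows "speed_shape_slope s < 0"
proof -
  have slope_deriv_pos: "0 < (z^2 - 3) / (1 + z^2)^3" if "s < z" for z
  proof -
    have "s^2 < z^2" using that assms(1) by (intro power_strict_mono) auto
    then show ?thesis
      using assms(2) one_plus_power2_pos[of z] by (intro divide_pos_pos) auto
  qed
  have mono: "speed_shape_slope x \<le> speed_shape_slope y" if "s \<le> x" "x \<le> y" for x y
  proof (rule DERIV_nonneg_imp_nondecreasing[OF that(2)])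
    fix z assume "x \<le> z"
    then have "s^2 \<le> z^2" using that(1) assms(1) by (intro power_mono) auto
    then have "0 \<le> (z^2 - 3) / (1 + z^2)^3"
      using assms(2) one_plus_power2_pos[of z] by (intro divide_nonneg_pos) auto
    then show "\<exists>d. DERIV speed_shape_slope z :> d \<and> 0 \<le> d"
      using DERIV_speed_shape_slope by blast
  qed
  have "speed_shape_slope s \<le> speed_shape_slope (s + 1)"
    by (rule mono) simp_all
  also have "\<dots> < speed_shape_slope (s + 2)"
  proof (rule DERIV_pos_imp_increasing[of "s + 1" "s + 2"])
    fix z assume "s + 1 \<le> z"
    then have "0 < (z^2 - 3) / (1 + z^2)^3" by (intro slope_deriv_pos) simp
    then show "\<exists>d. DERIV speed_shape_slope z :> d \<and> 0 < d"
      using DERIV_speed_shape_slope by blast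
  qed simp
  also have "speed_shape_slope (s + 2) \<le> 0"
  proof (rule tendsto_lowerbound[OF speed_shape_slope_tendsto])
    show "\<forall>\<^sub>F y in at_top. speed_shape_slope (s + 2) \<le> speed_shape_slope y"
      using eventually_ge_at_top[of "s + 2"] by eventually_elim (rule mono, simp_all)
  qed simp
  finally show ?thesis .
qed

context
  fixes a b :: real
  assumes bracket: "0 < a" "a \<le> b" "a^2 \<le> 3" "0 < speed_shape_slope a" "speed_shape_slope b < 0"
begin

lemma speed_shape_less_left_of_bracket:
  assumes "0 < t" "t < a"
  shows "speed_shape t < speed_shape a"
proof (rule DERIV_pos_imp_increasing[OF assms(2)])
  fix z assume z: "t \<le> z" "z \<le> a"
  have "speed_shape_slope a \<le> speed_shape_slope z"
    by (rule speed_shape_slope_antimono[OF _ z(2) bracket(3)]) (use z assms in linarith)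
  then have "0 < z * speed_shape_slope z / pi"
    using z assms bracket by simp
  then show "\<exists>d. DERIV speed_shape z :> d \<and> 0 < d"
    using DERIV_speed_shape by blast
qed

lemma speed_shape_less_right_of_bracket:
  assumes "b < t"
  shows "speed_shape t < speed_shape b"
proof (rule DERIV_neg_imp_decreasing[OF assms])
  fix z assume z: "b \<le> z" "z \<le> t"
  have "speed_shape_slope z < 0"
  proof (cases "z^2 \<le> 3")
    case True
    then have "speed_shape_slope z \<le> speed_shape_slope b"
      by (intro speed_shape_slope_antimono[OF _ z(1)]) (use bracket in linarith)
    then show ?thesis using bracket by simp
  next
    case False
    then show ?thesis
      by (intro speed_shape_slope_neg) (use z bracket in linarith)+
  qed
  moreover have "0 < z" using z bracket by simp
  ultimately have "z * speed_shape_slope z / pi < 0"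
    by (simp add: mult_pos_neg divide_neg_pos)
  then show "\<exists>d. DERIV speed_shape z :> d \<and> d < 0"
    using DERIV_speed_shape by blast
qed

lemma speed_shape_attains_max_in_bracket:
  "\<exists>s\<in>{a..b}. \<forall>t>0. speed_shape t \<le> speed_shape s"
proof -
  have "continuous_on {a..b} speed_shape"
    using DERIV_speed_shape by (intro DERIV_atLeastAtMost_imp_continuous_on) blast
  then obtain s where s: "s \<in> {a..b}" and max: "\<forall>y\<in>{a..b}. speed_shape y \<le> speed_shape s"
    using continuous_attains_sup[of "{a..b}" speed_shape] bracket by auto
  have "speed_shape t \<le> speed_shape s" if "t > 0" for t
  proof -
    consider "t < a" | "t \<in> {a..b}" | "b < t" by force
    then show ?thesis
    proof cases
      case 1
      have "speed_shape t < speed_shape a" by (rule speed_shape_less_left_of_bracket[OF that 1])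
      moreover have "speed_shape a \<le> speed_shape s" using max bracket by simp
      ultimately show ?thesis by simp
    next
      case 2
      then show ?thesis using max by blast
    next
      case 3
      have "speed_shape t < speed_shape b" by (rule speed_shape_less_right_of_bracket[OF 3])
      moreover have "speed_shape b \<le> speed_shape s" using max bracket by simp
      ultimately show ?thesis by simp
    qed
  qed
  then show ?thesis using s by blast
qed

lemma speed_shape_argmax_in_bracket:
  assumes "0 < s" "\<forall>t>0. speed_shape t \<le> speed_shape s"
  shows "s \<in> {a..b}"
proof (rule ccontr)
  assume "s \<notin> {a..b}"
  then consider "s < a" | "b < s" by force
  then show False
  proof cases
    case 1
    have "speed_shape s < speed_shape a" by (rule speed_shape_less_left_of_bracket[OF assms(1) 1])
    moreover have "speed_shape a \<le> speed_shape s" using assms(2) bracket by simp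
    ultimately show False by simp
  next
    case 2
    have "speed_shape s < speed_shape b" by (rule speed_shape_less_right_of_bracket[OF 2])
    moreover have "speed_shape b \<le> speed_shape s" using assms(2) bracket by simp
    ultimately show False by simp
  qed
qed

end

subsection \<open>Numerical bracketing of the maximiser\<close>

lemma arctan_eq_pi_quarter_plus:
  assumes "0 < s"
  shows "arctan s = pi/4 + arctan ((s - 1) / (s + 1))"
proof -
  have "arctan 1 + arctan ((s - 1) / (s + 1)) = arctan ((1 + (s - 1) / (s + 1)) / (1 - 1 * ((s - 1) / (s + 1))))"
    by (rule arctan_add) (use assms in \<open>auto simp: abs_less_iff field_simps\<close>)
  also have "(1 + (s - 1) / (s + 1)) / (1 - 1 * ((s - 1) / (s + 1))) = s"
    using assms by (simp add: field_simps)
  finally show ?thesis by (simp add: arctan_one)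
qed

lemma arctan_ge_taylor7:
  assumes "0 \<le> y"
  shows "y - y^3/3 + y^5/5 - y^7/7 \<le> arctan y"
proof -
  let ?g = "\<lambda>x. arctan x - (x - x^3/3 + x^5/5 - x^7/7)"
  have "?g 0 \<le> ?g y"
  proof (rule DERIV_nonneg_imp_nondecreasing[OF assms])
    fix x :: real
    have "DERIV ?g x :> inverse (1 + x^2) - (1 - x^2 + x^4 - x^6)"
      by (auto intro!: derivative_eq_intros simp: eval_nat_numeral)
    moreover have "inverse (1 + x^2) - (1 - x^2 + x^4 - x^6) = x^8 / (1 + x^2)"
      using one_plus_power2_pos[of x] by (simp add: field_simps)
    ultimately show "\<exists>d. DERIV ?g x :> d \<and> 0 \<le> d"
      using one_plus_power2_pos[of x] by (intro exI[of _ "x^8 / (1 + x^2)"]) simp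
  qed
  then show ?thesis by simp
qed

lemma arctan_le_taylor5:
  assumes "0 \<le> y"
  shows "arctan y \<le> y - y^3/3 + y^5/5"
proof -
  let ?g = "\<lambda>x. (x - x^3/3 + x^5/5) - arctan x"
  have "?g 0 \<le> ?g y"
  proof (rule DERIV_nonneg_imp_nondecreasing[OF assms])
    fix x :: real
    have "DERIV ?g x :> (1 - x^2 + x^4) - inverse (1 + x^2)"
      by (auto intro!: derivative_eq_intros simp: eval_nat_numeral)
    moreover have "(1 - x^2 + x^4) - inverse (1 + x^2) = x^6 / (1 + x^2)"
      using one_plus_power2_pos[of x] by (simp add: field_simps)
    ultimately show "\<exists>d. DERIV ?g x :> d \<and> 0 \<le> d"
      using one_plus_power2_pos[of x] by (intro exI[of _ "x^6 / (1 + x^2)"]) simp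
  qed
  then show ?thesis by simp
qed

text \<open>
  The arctan values are reduced by
  \<open>arctan s = \<pi>/4 + arctan ((s - 1)/(s + 1))\<close> to arguments below 0.1, where a few Taylor
  terms suffice.
\<close>

lemma speed_shape_slope_lower_bracket: "0 < speed_shape_slope (758/625)"
proof -
  have "arctan (133/1383::real) \<le> 133/1383 - (133/1383)^3/3 + (133/1383)^5/5"
    by (rule arctan_le_taylor5) simp
  moreover have "(133/1383::real) - (133/1383)^3/3 + (133/1383)^5/5 = 2425364019407203/25297692242135715"
    by (simp add: power_divide)
  moreover have "(758/625::real) / (1 + (758/625)^2) + (758/625) / (1 + (758/625)^2)^2 = 642316882500/931589805721"
    by (simp add: power2_eq_square)
  moreover have "3141592653588/1000000000000 \<le> pi" using pi_approx(1) by simp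
  moreover have "speed_shape_slope (758/625)
      = pi/4 - arctan (133/1383) - (758/625) / (1 + (758/625)^2) - (758/625) / (1 + (758/625)^2)^2"
    using arctan_eq_pi_quarter_plus[of "758/625"] by (simp add: speed_shape_slope_def)
  ultimately show ?thesis by linarith
qed

lemma speed_shape_slope_upper_bracket: "speed_shape_slope (60661/50000) < 0"
proof -
  have "10661/110661 - (10661/110661)^3/3 + (10661/110661)^5/5 - (10661/110661)^7/7 \<le> arctan (10661/110661::real)"
    by (rule arctan_ge_taylor7) simp
  moreover have "(10661/110661::real) - (10661/110661)^3/3 + (10661/110661)^5/5 - (10661/110661)^7/7
      = 97588190200598517619087544528183276/1016089906966605605185287535203411105"
    by (simp add: power_divide)
  moreover have "(60661/50000::real) / (1 + (60661/50000)^2) + (60661/50000) / (1 + (60661/50000)^2)^2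
      = 26326136729239050000/38189395602647400241"
    by (simp add: power2_eq_square)
  moreover have "pi \<le> 31415926535899/10000000000000" using pi_approx(2) by simp
  moreover have "speed_shape_slope (60661/50000)
      = pi/4 - arctan (10661/110661) - (60661/50000) / (1 + (60661/50000)^2) - (60661/50000) / (1 + (60661/50000)^2)^2"
    using arctan_eq_pi_quarter_plus[of "60661/50000"] by (simp add: speed_shape_slope_def)
  ultimately show ?thesis by linarith
qed

lemma round_acceptance_on_bracket:
  assumes "758/625 \<le> s" "s \<le> 60661/50000"
  shows "round (1000 * (1 - 2 * arctan s / pi)) = 439"
proof (rule round_unique)
  have "133/1383 - (133/1383)^3/3 + (133/1383)^5/5 - (133/1383)^7/7 \<le> arctan (133/1383::real)"
    by (rule arctan_ge_taylor7) simp
  moreover have "(133/1383::real) - (133/1383)^3/3 + (133/1383)^5/5 - (133/1383)^7/7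
      = 4638966555100362590812/48386617676918318587635"
    by (simp add: power_divide)
  moreover have "arctan (758/625) = pi/4 + arctan (133/1383)"
    using arctan_eq_pi_quarter_plus[of "758/625"] by simp
  moreover have "arctan (758/625) \<le> arctan s"
    using assms(1) by (simp add: arctan_le_iff)
  moreover have "pi \<le> 31415926535899/10000000000000" using pi_approx(2) by simp
  ultimately have "5605/10 * pi < 2000 * arctan s" by linarith
  then show "1000 * (1 - 2 * arctan s / pi) - 1/2 < real_of_int 439"
    by (simp add: field_simps)
next
  have "arctan (10661/110661::real) \<le> 10661/110661 - (10661/110661)^3/3 + (10661/110661)^5/5"
    by (rule arctan_le_taylor5) simp
  moreover have "(10661/110661::real) - (10661/110661)^3/3 + (10661/110661)^5/5
      = 7969079012645793906666971/82974177595048320031346505"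
    by (simp add: power_divide)
  moreover have "arctan (60661/50000) = pi/4 + arctan (10661/110661)"
    using arctan_eq_pi_quarter_plus[of "60661/50000"] by simp
  moreover have "arctan s \<le> arctan (60661/50000)"
    using assms(2) by (simp add: arctan_le_iff)
  moreover have "3141592653588/1000000000000 \<le> pi" using pi_approx(1) by simp
  ultimately have "2000 * arctan s \<le> 5615/10 * pi" by linarith
  then show "real_of_int 439 \<le> 1000 * (1 - 2 * arctan s / pi) + 1/2"
    by (simp add: field_simps)
qed

lemma speed_maximal_iff_speed_shape_maximal:
  assumes "II > 0" "l > 0"
  shows "(\<forall>l'>0. speed II l' \<le> speed II l) \<longleftrightarrow> (\<forall>t>0. speed_shape t \<le> speed_shape (l * sqrt II / 2))"
proof -
  have le_iff: "speed II l' \<le> speed II l \<longleftrightarrow> speed_shape (l' * sqrt II / 2) \<le> speed_shape (l * sqrt II / 2)" for l'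
    using assms by (simp add: speed_eq_speed_shape divide_le_cancel)
  show ?thesis
  proof (intro iffI allI impI)
    fix t :: real assume "\<forall>l'>0. speed II l' \<le> speed II l" "0 < t"
    then show "speed_shape t \<le> speed_shape (l * sqrt II / 2)"
      using le_iff[of "2 * t / sqrt II"] assms by simp
  next
    fix l' :: real assume "\<forall>t>0. speed_shape t \<le> speed_shape (l * sqrt II / 2)" "0 < l'"
    then show "speed II l' \<le> speed II l"
      using le_iff[of l'] assms by simp
  qed
qed

theorem corollary1:
  fixes II :: real
  assumes "II > 0"
  shows "(\<exists>l>0. \<forall>l'>0. speed II l' \<le> speed II l) \<and>
         (\<forall>l>0. (\<forall>l'>0. speed II l' \<le> speed II l) \<longrightarrow>
            round (1000 * (l * sqrt II)) = 2426 \<and>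
            round (1000 * acc_rate II l) = 439)"
proof
  have bracket: "0 < (758/625::real)" "758/625 \<le> (60661/50000::real)" "(758/625::real)^2 \<le> 3"
      "0 < speed_shape_slope (758/625)" "speed_shape_slope (60661/50000) < 0"
    by (simp_all add: speed_shape_slope_lower_bracket speed_shape_slope_upper_bracket power2_eq_square)
  have sqrt_pos: "0 < sqrt II" using assms by simp
  obtain s where s: "758/625 \<le> s" and max: "\<forall>t>0. speed_shape t \<le> speed_shape s"
    using speed_shape_attains_max_in_bracket[OF bracket] by auto
  define l where "l = 2 * s / sqrt II"
  have l: "0 < l" "l * sqrt II / 2 = s"
    using s sqrt_pos by (auto simp: l_def)
  then show "\<exists>l>0. \<forall>l'>0. speed II l' \<le> speed II l"
    using speed_maximal_iff_speed_shape_maximal[OF assms l(1)] max by auto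
  show "\<forall>l>0. (\<forall>l'>0. speed II l' \<le> speed II l) \<longrightarrow>
      round (1000 * (l * sqrt II)) = 2426 \<and> round (1000 * acc_rate II l) = 439"
  proof (intro allI impI)
    fix l :: real assume l: "l > 0" and "\<forall>l'>0. speed II l' \<le> speed II l"
    then have "l * sqrt II / 2 \<in> {758/625..60661/50000}"
      using speed_maximal_iff_speed_shape_maximal[OF assms l] sqrt_pos
      by (intro speed_shape_argmax_in_bracket[OF bracket]) auto
    then have bounds: "758/625 \<le> l * sqrt II / 2" "l * sqrt II / 2 \<le> 60661/50000"
      by auto
    have "round (1000 * (l * sqrt II)) = 2426"
      by (rule round_unique) (use bounds in linarith)+
    moreover have "round (1000 * acc_rate II l) = 439"
      unfolding acc_rate_eq by (rule round_acceptance_on_bracket[OF bounds])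
    ultimately show "round (1000 * (l * sqrt II)) = 2426 \<and> round (1000 * acc_rate II l) = 439" ..
  qed
qed

end
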